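(* Let $G$ be a graph obtained by taking a disjoint union of complete graphs $K_{n_1}\cup\cdots\cup K_{n_\ell}$ with each $n_i\ge 2$ and adding edges between distinct cliques such that the added edges form a matching. Then $G$ is well-bicovered.
   Context: All graphs are finite and simple; "subgraph" means induced subgraph. A graph is well-bicovered if every vertex-inclusion-maximal induced bipartite subgraph has the same order. *)

theory Defs
  imports Main "HOL-Library.Disjoint_Sets"
begin

text \<open>A finite simple graph is given by a finite vertex set V and a symmetric,
irreflexive edge relation E on V. Subgraphs are induced, so they are given by
vertex subsets.\<close>

definition induced_bipartite :: "('a \<Rightarrow> 'a \<Rightarrow> bool) \<Rightarrow> 'a set \<Rightarrow> bool" where
  "induced_bipartite E S \<longleftrightarrow>
     (\<exists>A B. S = A \<union> B \<and> A \<inter> B = {} \<and>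
            (\<forall>u\<in>A. \<forall>v\<in>A. \<not> E u v) \<and> (\<forall>u\<in>B. \<forall>v\<in>B. \<not> E u v))"

definition maximal_induced_bipartite :: "'a set \<Rightarrow> ('a \<Rightarrow> 'a \<Rightarrow> bool) \<Rightarrow> 'a set \<Rightarrow> bool" where
  "maximal_induced_bipartite V E S \<longleftrightarrow>
     S \<subseteq> V \<and> induced_bipartite E S \<and>
     (\<forall>T. S \<subset> T \<and> T \<subseteq> V \<longrightarrow> \<not> induced_bipartite E T)"

definition well_bicovered :: "'a set \<Rightarrow> ('a \<Rightarrow> 'a \<Rightarrow> bool) \<Rightarrow> bool" where
  "well_bicovered V E \<longleftrightarrow>
     (\<forall>S T. maximal_induced_bipartite V E S \<longrightarrow> maximal_induced_bipartite V E T
            \<longrightarrow> card S = card T)"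

end

theory Submission
  imports Defs
begin

text \<open>Every maximal induced bipartite subgraph meets every clique in exactly two vertices,
so all of them have order twice the number of cliques. At most two vertices fit, since a
bipartite graph contains no triangle. If some clique were met in fewer than two vertices, one
could add one more vertex of it: the enlarged set still meets every clique in at most two
vertices, so the edges it induces form the union of two matchings (pairs inside a clique, and
the added matching). Such a union is bipartite, as its cycles alternate between the two
matchings and are therefore even.\<close>

lemma induced_bipartite_iff_colouring:
  "induced_bipartite E S \<longleftrightarrow> (\<exists>f :: 'a \<Rightarrow> bool. \<forall>u\<in>S. \<forall>v\<in>S. E u v \<longrightarrow> f u \<noteq> f v)"
proof
  assume "induced_bipartite E S"
  then obtain A B where "S = A \<union> B"
    and "\<forall>u\<in>A. \<forall>v\<in>A. \<not> E u v" "\<forall>u\<in>B. \<forall>v\<in>B. \<not> E u v"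
    unfolding induced_bipartite_def by blast
  then show "\<exists>f :: 'a \<Rightarrow> bool. \<forall>u\<in>S. \<forall>v\<in>S. E u v \<longrightarrow> f u \<noteq> f v"
    by (intro exI[of _ "\<lambda>u. u \<in> A"]) blast
next
  assume "\<exists>f :: 'a \<Rightarrow> bool. \<forall>u\<in>S. \<forall>v\<in>S. E u v \<longrightarrow> f u \<noteq> f v"
  then obtain f :: "'a \<Rightarrow> bool" where "\<forall>u\<in>S. \<forall>v\<in>S. E u v \<longrightarrow> f u \<noteq> f v" ..
  then show "induced_bipartite E S"
    unfolding induced_bipartite_def
    by (intro exI[of _ "{u\<in>S. f u}"] exI[of _ "{u\<in>S. \<not> f u}"]) auto
qed

lemma induced_bipartite_mono:
  assumes "induced_bipartite E' S" and "\<And>u v. u \<in> S \<Longrightarrow> v \<in> S \<Longrightarrow> E u v \<Longrightarrow> E' u v"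
  shows "induced_bipartite E S"
  using assms unfolding induced_bipartite_def by (metis Un_iff)

lemma induced_bipartite_clique_card_le_2:
  assumes "induced_bipartite E S" and "K \<subseteq> S"
    and clique: "\<And>u v. u \<in> K \<Longrightarrow> v \<in> K \<Longrightarrow> u \<noteq> v \<Longrightarrow> E u v"
  shows "card K \<le> 2"
proof (rule ccontr)
  assume "\<not> card K \<le> 2"
  then obtain T where "T \<subseteq> K" "card T = 3"
    by (metis not_less_eq_eq numeral_2_eq_2 numeral_3_eq_3 obtain_subset_with_card_n)
  then obtain x y z where xyz: "x \<in> K" "y \<in> K" "z \<in> K" "x \<noteq> y" "y \<noteq> z" "x \<noteq> z"
    by (auto simp: card_3_iff)
  obtain A B where "S = A \<union> B" "\<forall>u\<in>A. \<forall>v\<in>A. \<not> E u v" "\<forall>u\<in>B. \<forall>v\<in>B. \<not> E u v"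
    using assms(1) unfolding induced_bipartite_def by blast
  with xyz \<open>K \<subseteq> S\<close> clique show False
    by (metis Un_iff subsetD)
qed

definition matching :: "('a \<Rightarrow> 'a \<Rightarrow> bool) \<Rightarrow> bool" where
  "matching m \<longleftrightarrow> symp m \<and> irreflp m \<and> (\<forall>u v w. m u v \<longrightarrow> m u w \<longrightarrow> v = w)"

text \<open>Contraction of a \<open>c\<close>-edge \<open>x y\<close>: the path \<open>a x y b\<close> through the \<open>m\<close>-partners of
\<open>x\<close> and \<open>y\<close> is replaced by the edge \<open>a b\<close>, which has the same parity, so 2-colourings of the
contracted graph extend to \<open>x\<close> and \<open>y\<close>.\<close>

definition shortcut :: "('a \<Rightarrow> 'a \<Rightarrow> bool) \<Rightarrow> 'a \<Rightarrow> 'a \<Rightarrow> 'a \<Rightarrow> 'a \<Rightarrow> bool" where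
  "shortcut m x y u v \<longleftrightarrow>
     u \<notin> {x, y} \<and> v \<notin> {x, y} \<and> (m u v \<or> m x u \<and> m y v \<or> m y u \<and> m x v)"

lemma matching_shortcut:
  assumes "matching m" and "x \<noteq> y"
  shows "matching (shortcut m x y)"
proof -
  have "symp (shortcut m x y)"
    using assms unfolding matching_def shortcut_def symp_def by blast
  moreover have "irreflp (shortcut m x y)"
    using assms unfolding matching_def shortcut_def symp_def irreflp_def by blast
  moreover have "v = w" if "shortcut m x y u v" "shortcut m x y u w" for u v w
    using that assms unfolding matching_def shortcut_def symp_def irreflp_def by blast
  ultimately show ?thesis
    unfolding matching_def by blast
qed

lemma shortcut_colouring_partners:
  fixes g :: "'a \<Rightarrow> bool"
  assumes m: "matching m" and "x \<notin> T" "y \<notin> T"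
    and g: "\<forall>u\<in>T. \<forall>v\<in>T. shortcut m x y u v \<longrightarrow> g u \<noteq> g v"
  obtains p where "\<And>a. a \<in> T \<Longrightarrow> m x a \<Longrightarrow> g a \<noteq> p"
    and "\<And>b. b \<in> T \<Longrightarrow> m y b \<Longrightarrow> g b = p"
proof (cases "\<exists>a\<in>T. m x a")
  case True
  then obtain a where a: "a \<in> T" "m x a" ..
  have "g b \<noteq> g a" if "b \<in> T" "m y b" for b
  proof -
    from a that \<open>x \<notin> T\<close> \<open>y \<notin> T\<close> have "shortcut m x y a b"
      unfolding shortcut_def by blast
    with g a(1) that(1) show ?thesis
      by metis
  qed
  moreover have "a' = a" if "m x a'" for a'
    using m a(2) that unfolding matching_def by blast
  ultimately show ?thesis
    using a by (intro that[of "\<not> g a"]) blast+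
next
  case False
  have "b' = b" if "m y b" "m y b'" for b b'
    using m that unfolding matching_def by blast
  with False show ?thesis
    by (intro that[of "\<forall>b\<in>T. m y b \<longrightarrow> g b"]) blast+
qed

lemma induced_bipartite_extend_shortcut:
  assumes c: "matching c" and m: "matching m" and "c x y"
    and bip: "induced_bipartite (sup c (shortcut m x y)) (S - {x, y})"
  shows "induced_bipartite (sup c m) S"
proof -
  define S' where "S' = S - {x, y}"
  from bip obtain g :: "'a \<Rightarrow> bool"
    where g: "\<forall>u\<in>S'. \<forall>v\<in>S'. c u v \<or> shortcut m x y u v \<longrightarrow> g u \<noteq> g v"
    unfolding induced_bipartite_iff_colouring S'_def sup_apply sup_bool_def by blast
  have "x \<noteq> y"
    using c \<open>c x y\<close> unfolding matching_def irreflp_def by blast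
  from g have "\<forall>u\<in>S'. \<forall>v\<in>S'. shortcut m x y u v \<longrightarrow> g u \<noteq> g v"
    by blast
  then obtain p where partner_x: "\<And>a. a \<in> S' \<Longrightarrow> m x a \<Longrightarrow> g a \<noteq> p"
    and partner_y: "\<And>b. b \<in> S' \<Longrightarrow> m y b \<Longrightarrow> g b = p"
    by (rule shortcut_colouring_partners[OF m, rotated 2]) (simp_all add: S'_def)
  define f where "f z = (if z = x then p else if z = y then \<not> p else g z)" for z
  have c_x: "c x z \<Longrightarrow> z = y" and c_y: "c y z \<Longrightarrow> z = x" for z
    using c \<open>c x y\<close> unfolding matching_def symp_def by blast+
  have edge_x: "f x \<noteq> f z" if "z \<in> S" "c x z \<or> m x z" for z
  proof (cases "z = y")
    case False
    with that c_x m have "z \<in> S'" "m x z"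
      unfolding S'_def matching_def irreflp_def by auto
    with partner_x \<open>z \<noteq> y\<close> show ?thesis
      unfolding f_def S'_def by auto
  qed (use \<open>x \<noteq> y\<close> f_def in simp)
  have edge_y: "f y \<noteq> f z" if "z \<in> S" "c y z \<or> m y z" for z
  proof (cases "z = x")
    case False
    with that c_y m have "z \<in> S'" "m y z"
      unfolding S'_def matching_def irreflp_def by auto
    with partner_y \<open>z \<noteq> x\<close> \<open>x \<noteq> y\<close> show ?thesis
      unfolding f_def S'_def by auto
  qed (use \<open>x \<noteq> y\<close> f_def in simp)
  have edge_S': "f u \<noteq> f v" if "u \<in> S'" "v \<in> S'" "c u v \<or> m u v" for u v
    using that g unfolding f_def S'_def shortcut_def by auto
  have "f u \<noteq> f v" if "u \<in> S" "v \<in> S" "c u v \<or> m u v" for u v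
  proof -
    from that c m have "c v u \<or> m v u"
      unfolding matching_def symp_def by blast
    with that edge_x edge_y edge_S' show ?thesis
      unfolding S'_def by (metis Diff_iff insertE singletonD)
  qed
  then show ?thesis
    unfolding induced_bipartite_iff_colouring by auto
qed

lemma induced_bipartite_sup_matchings:
  assumes "finite S" and "matching c" and "matching m"
  shows "induced_bipartite (sup c m) S"
  using assms
proof (induction "card S" arbitrary: S c m rule: less_induct)
  case less
  show ?case
  proof (cases "\<exists>x\<in>S. \<exists>y\<in>S. c x y \<or> m x y")
    case False
    then show ?thesis
      unfolding induced_bipartite_def by (intro exI[of _ S] exI[of _ "{}"]) auto
  next
    case True
    then obtain x y where "x \<in> S" and xy: "c x y \<or> m x y"
      by blast
    with less.prems have "x \<noteq> y"
      unfolding matching_def by (metis irreflpD)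
    from \<open>x \<in> S\<close> less.prems(1) have "card (S - {x, y}) < card S"
      by (intro psubset_card_mono) auto
    with less.prems(1) have IH: "induced_bipartite (sup c' m') (S - {x, y})"
      if "matching c'" "matching m'" for c' m'
      using that by (intro less.hyps) auto
    from xy show ?thesis
    proof
      assume "c x y"
      with less.prems(2,3) \<open>x \<noteq> y\<close> show ?thesis
        by (blast intro: induced_bipartite_extend_shortcut IH matching_shortcut)
    next
      assume "m x y"
      with less.prems(2,3) \<open>x \<noteq> y\<close> have "induced_bipartite (sup m c) S"
        by (blast intro: induced_bipartite_extend_shortcut IH matching_shortcut)
      then show ?thesis
        by (simp add: sup_commute)
    qed
  qed
qed

locale cliques_plus_matching =
  fixes V :: "'a set" and P :: "'a set set" and M E :: "'a \<Rightarrow> 'a \<Rightarrow> bool"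
  assumes finite_V: "finite V"
    and partition: "partition_on V P"
    and card_clique_ge_2: "C \<in> P \<Longrightarrow> 2 \<le> card C"
    and matching_M: "matching M"
    and E_iff: "E u v \<longleftrightarrow> (\<exists>C\<in>P. u \<in> C \<and> v \<in> C \<and> u \<noteq> v) \<or> M u v"
begin

lemma clique_unique: "C \<in> P \<Longrightarrow> C' \<in> P \<Longrightarrow> u \<in> C \<Longrightarrow> u \<in> C' \<Longrightarrow> C = C'"
  using partition_onD2[OF partition] by (auto dest: disjointD)

lemma finite_clique: "C \<in> P \<Longrightarrow> finite C"
  using partition_onD1[OF partition] finite_V by (metis Union_upper finite_subset)

lemma card_Int_clique_le_2:
  assumes "induced_bipartite E S" and "C \<in> P"
  shows "card (S \<inter> C) \<le> 2"
  using assms by (intro induced_bipartite_clique_card_le_2[of E S]) (auto simp: E_iff)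

lemma induced_bipartite_if_card_Int_cliques_le_2:
  assumes "S \<subseteq> V" and le_2: "\<And>C. C \<in> P \<Longrightarrow> card (S \<inter> C) \<le> 2"
  shows "induced_bipartite E S"
proof -
  define c where "c u v \<longleftrightarrow> u \<in> S \<and> v \<in> S \<and> u \<noteq> v \<and> (\<exists>C\<in>P. u \<in> C \<and> v \<in> C)" for u v
  have "v = w" if "c u v" "c u w" for u v w
  proof (rule ccontr)
    assume "v \<noteq> w"
    from that obtain C where C: "C \<in> P" "{u, v, w} \<subseteq> S \<inter> C" "u \<noteq> v" "u \<noteq> w"
      unfolding c_def using clique_unique by blast
    with \<open>v \<noteq> w\<close> have "3 \<le> card (S \<inter> C)"
      by (metis card_3_iff card_mono finite_Int finite_clique)
    with le_2 C(1) show False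
      by fastforce
  qed
  then have "matching c"
    unfolding matching_def c_def symp_def irreflp_def by blast
  moreover have "finite S"
    using assms(1) finite_V finite_subset by blast
  ultimately have "induced_bipartite (sup c M) S"
    using matching_M by (intro induced_bipartite_sup_matchings)
  then show ?thesis
    by (rule induced_bipartite_mono) (auto simp: E_iff c_def)
qed

lemma card_Int_clique_maximal:
  assumes max: "maximal_induced_bipartite V E S" and C: "C \<in> P"
  shows "card (S \<inter> C) = 2"
proof (rule ccontr)
  assume "card (S \<inter> C) \<noteq> 2"
  with max C have lt_2: "card (S \<inter> C) < 2"
    using card_Int_clique_le_2 unfolding maximal_induced_bipartite_def by fastforce
  with card_clique_ge_2[OF C] obtain v where v: "v \<in> C" "v \<notin> S"
    by (metis Int_absorb1 not_le subsetI)
  have "v \<in> V"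
    using v C partition_onD1[OF partition] by blast
  have "card (insert v S \<inter> C') \<le> 2" if "C' \<in> P" for C'
  proof (cases "v \<in> C'")
    case True
    with that v C have "insert v S \<inter> C' = insert v (S \<inter> C)"
      using clique_unique by blast
    with lt_2 finite_clique[OF C] show ?thesis
      by (simp add: card_insert_if)
  next
    case False
    with max that show ?thesis
      using card_Int_clique_le_2 unfolding maximal_induced_bipartite_def by auto
  qed
  with max \<open>v \<in> V\<close> have "induced_bipartite E (insert v S)"
    unfolding maximal_induced_bipartite_def
    by (intro induced_bipartite_if_card_Int_cliques_le_2) auto
  with max v \<open>v \<in> V\<close> show False
    unfolding maximal_induced_bipartite_def by blast
qed

lemma card_maximal_induced_bipartite:
  assumes "maximal_induced_bipartite V E S"
  shows "card S = 2 * card P"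
proof -
  have "S = (\<Union>C\<in>P. S \<inter> C)"
    using assms partition_onD1[OF partition] unfolding maximal_induced_bipartite_def by blast
  also have "card \<dots> = (\<Sum>C\<in>P. card (S \<inter> C))"
    using finite_elements[OF finite_V partition] finite_clique clique_unique
    by (intro card_UN_disjoint) auto
  also have "\<dots> = (\<Sum>C\<in>P. 2)"
    using assms card_Int_clique_maximal by simp
  finally show ?thesis
    by simp
qed

theorem well_bicovered: "well_bicovered V E"
  unfolding well_bicovered_def using card_maximal_induced_bipartite by simp

end

theorem mainTheorem14:
  fixes V :: "'a set" and P :: "'a set set"
    and M :: "'a \<Rightarrow> 'a \<Rightarrow> bool" and E :: "'a \<Rightarrow> 'a \<Rightarrow> bool"
  assumes finV: "finite V"
    and part: "partition_on V P"
    and cliques_ge2: "\<forall>C\<in>P. card C \<ge> 2"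
    and M_sym: "\<forall>u v. M u v \<longrightarrow> M v u"
    and M_in_V: "\<forall>u v. M u v \<longrightarrow> u \<in> V \<and> v \<in> V"
    and M_between: "\<forall>u v. M u v \<longrightarrow> \<not> (\<exists>C\<in>P. u \<in> C \<and> v \<in> C)"
    and M_matching: "\<forall>u v w. M u v \<longrightarrow> M u w \<longrightarrow> v = w"
    and E_def: "\<forall>u v. E u v \<longleftrightarrow> ((\<exists>C\<in>P. u \<in> C \<and> v \<in> C) \<and> u \<noteq> v) \<or> M u v"
  shows "well_bicovered V E"
proof -
  have "\<not> M u u" for u
    using M_in_V M_between partition_onD1[OF part] by blast
  with M_sym M_matching have "matching M"
    unfolding matching_def symp_def by (blast intro: irreflpI)
  interpret cliques_plus_matching V P M E
  proof
    show "\<And>C. C \<in> P \<Longrightarrow> 2 \<le> card C"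
      using cliques_ge2 by blast
    show "\<And>u v. E u v \<longleftrightarrow> (\<exists>C\<in>P. u \<in> C \<and> v \<in> C \<and> u \<noteq> v) \<or> M u v"
      using E_def by blast
  qed fact+
  show ?thesis
    by (rule well_bicovered)
qed

end
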